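(* Let $\Phi:(\mathcal{S},g)\to(\mathcal{M},\bar g)$ be an isometric immersion of an $n$-dimensional orientable Riemannian manifold into a semi-Riemannian manifold with co-dimension $k$. Assume that $\dim\mathrm{Im}\,\widetilde h_p$ is constant on $\mathcal{S}$ (equivalently, $\dim\mathscr{U}_p$ is constant on $\mathcal{S}$). Then the shear space $\mathrm{Im}\,\widetilde h$ and the umbilical space $\mathscr{U}$ of $\mathcal{S}$ are well defined, and $$\mathscr{U}=(\mathrm{Im}\,\widetilde h)^\perp,\qquad k-\dim\mathscr{U}=\dim\mathrm{Im}\,\widetilde h.$$
   Context: $g=\Phi^\star\bar g$ is positive definite. $h$ is the second fundamental form, $A_\xi$ the shape operator ($g(A_\xi X,Y)=\bar g(h(X,Y),\xi)$), $H=\frac1n\mathrm{tr}_gh$ the mean curvature vector, and $\widetilde h(X,Y)=h(X,Y)-g(X,Y)H$ the total shear tensor. The shear space at $p$ is $\mathrm{Im}\,\widetilde h_p=\mathrm{span}\{\widetilde h(v,w):v,w\in T_p\mathcal{S}\}$ and the umbilical space at $p$ is $\mathscr{U}_p=\{\xi_p\in T_p\mathcal{S}^\perp:A_{\xi_p}\text{ proportional to the identity}\}$. When these have constant dimension, the shear space of $\mathcal{S}$ is $\mathrm{Im}\,\widetilde h=\bigcup_p\mathrm{Im}\,\widetilde h_p$ (a module over functions on $\mathcal{S}$ of dimension $\dim\mathrm{Im}\,\widetilde h_p$), and the umbilical space of $\mathcal{S}$ is $\mathscr{U}=\{\xi\text{ normal vector field}:A_\xi\text{ proportional to identity}\}$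 (a module of dimension $\dim\mathscr{U}_p$). $(\mathrm{Im}\,\widetilde h)^\perp$ denotes the normal vector fields $\bar g$-orthogonal at each point to $\mathrm{Im}\,\widetilde h_p$. *)

theory Defs
  imports "HOL-Analysis.Analysis"
begin

text \<open>Pointwise (algebraic) model of an isometric immersion: at each point p of S we have
 the tangent space real^'n with induced metric g p, the normal space real^'k with the
 restriction gb p of the ambient semi-Riemannian metric, and the second fundamental
 form h p : T_p x T_p -> N_p.\<close>

definition pos_def_form :: "('a::real_vector \<Rightarrow> 'a \<Rightarrow> real) \<Rightarrow> bool" where
  "pos_def_form B \<longleftrightarrow> bilinear B \<and> (\<forall>x y. B x y = B y x) \<and> (\<forall>x. x \<noteq> 0 \<longrightarrow> B x x > 0)"

definition nondeg_sym_form :: "('a::real_vector \<Rightarrow> 'a \<Rightarrow> real) \<Rightarrow> bool" where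
  "nondeg_sym_form B \<longleftrightarrow> bilinear B \<and> (\<forall>x y. B x y = B y x) \<and>
     (\<forall>x. (\<forall>y. B x y = 0) \<longrightarrow> x = 0)"

definition sym_bilinear_map :: "('a::real_vector \<Rightarrow> 'a \<Rightarrow> 'b::real_vector) \<Rightarrow> bool" where
  "sym_bilinear_map h \<longleftrightarrow> bilinear h \<and> (\<forall>x y. h x y = h y x)"

definition gram :: "(real^'n \<Rightarrow> real^'n \<Rightarrow> real) \<Rightarrow> real^'n^'n" where
  "gram g = (\<chi> i j. g (axis i 1) (axis j 1))"

definition trace_g :: "(real^'n \<Rightarrow> real^'n \<Rightarrow> real) \<Rightarrow> (real^'n \<Rightarrow> real^'n \<Rightarrow> 'b::real_vector) \<Rightarrow> 'b" where
  "trace_g g h = (\<Sum>i\<in>UNIV. \<Sum>j\<in>UNIV. (matrix_inv (gram g) $ i $ j) *\<^sub>R h (axis i 1) (axis j 1))"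

definition mean_curv :: "(real^'n \<Rightarrow> real^'n \<Rightarrow> real) \<Rightarrow> (real^'n \<Rightarrow> real^'n \<Rightarrow> 'b::real_vector) \<Rightarrow> 'b" where
  "mean_curv g h = (1 / real CARD('n)) *\<^sub>R trace_g g h"

definition shear :: "(real^'n \<Rightarrow> real^'n \<Rightarrow> real) \<Rightarrow> (real^'n \<Rightarrow> real^'n \<Rightarrow> 'b::real_vector)
    \<Rightarrow> real^'n \<Rightarrow> real^'n \<Rightarrow> 'b" where
  "shear g h X Y = h X Y - g X Y *\<^sub>R mean_curv g h"

definition shape_op :: "(real^'n \<Rightarrow> real^'n \<Rightarrow> real) \<Rightarrow> ('b \<Rightarrow> 'b \<Rightarrow> real)
    \<Rightarrow> (real^'n \<Rightarrow> real^'n \<Rightarrow> 'b) \<Rightarrow> 'b \<Rightarrow> real^'n \<Rightarrow> real^'n" where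
  "shape_op g gb h \<xi> = (THE A. \<forall>X Y. g (A X) Y = gb (h X Y) \<xi>)"

definition shear_space :: "(real^'n \<Rightarrow> real^'n \<Rightarrow> real) \<Rightarrow> (real^'n \<Rightarrow> real^'n \<Rightarrow> 'b::real_vector) \<Rightarrow> 'b set" where
  "shear_space g h = span {shear g h v w | v w. True}"

definition umbilical_space :: "(real^'n \<Rightarrow> real^'n \<Rightarrow> real) \<Rightarrow> ('b \<Rightarrow> 'b \<Rightarrow> real)
    \<Rightarrow> (real^'n \<Rightarrow> real^'n \<Rightarrow> 'b) \<Rightarrow> 'b set" where
  "umbilical_space g gb h = {\<xi>. \<exists>c::real. shape_op g gb h \<xi> = (\<lambda>X. c *\<^sub>R X)}"

definition orth_compl :: "('b \<Rightarrow> 'b \<Rightarrow> real) \<Rightarrow> 'b set \<Rightarrow> 'b set" where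
  "orth_compl gb W = {\<xi>. \<forall>\<eta>\<in>W. gb \<xi> \<eta> = 0}"

text \<open>Module-level objects: normal vector fields over S.\<close>
definition umbilical_fields :: "'p set \<Rightarrow> ('p \<Rightarrow> real^'n \<Rightarrow> real^'n \<Rightarrow> real) \<Rightarrow> ('p \<Rightarrow> 'b \<Rightarrow> 'b \<Rightarrow> real)
    \<Rightarrow> ('p \<Rightarrow> real^'n \<Rightarrow> real^'n \<Rightarrow> 'b) \<Rightarrow> ('p \<Rightarrow> 'b) set" where
  "umbilical_fields S g gb h = {\<xi>. \<forall>p\<in>S. \<xi> p \<in> umbilical_space (g p) (gb p) (h p)}"

definition shear_perp_fields :: "'p set \<Rightarrow> ('p \<Rightarrow> real^'n \<Rightarrow> real^'n \<Rightarrow> real) \<Rightarrow> ('p \<Rightarrow> 'b \<Rightarrow> 'b \<Rightarrow> real)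
    \<Rightarrow> ('p \<Rightarrow> real^'n \<Rightarrow> real^'n \<Rightarrow> 'b::real_vector) \<Rightarrow> ('p \<Rightarrow> 'b) set" where
  "shear_perp_fields S g gb h = {\<xi>. \<forall>p\<in>S. \<xi> p \<in> orth_compl (gb p) (shear_space (g p) (h p))}"

end

theory Submission
  imports Defs
begin

text \<open>A normal vector \<xi> is orthogonal to every shear vector h(X,Y) - g(X,Y) H exactly when
  \<open>gb(h(X,Y), \<xi>) = gb(H, \<xi>) g(X,Y)\<close>, i.e. when \<open>A\<^sub>\<xi> = gb(H, \<xi>) id\<close>; conversely, if \<open>A\<^sub>\<xi> = c id\<close>
  then taking the g-trace gives \<open>c = gb(H, \<xi>)\<close>. Hence the umbilical space is the gb-orthogonal
  complement of the shear space at every point, and since gb is nondegenerate the dimensions of a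
  subspace and of its orthogonal complement add up to the codimension k.\<close>

definition form_vec :: "(real^'n \<Rightarrow> real^'n \<Rightarrow> real) \<Rightarrow> real^'n \<Rightarrow> real^'n" where
  "form_vec B y = (\<chi> i. B (axis i 1) y)"

lemma linear_eq_inner_axis:
  fixes l :: "real^'n \<Rightarrow> real"
  assumes "linear l"
  shows "l x = x \<bullet> (\<chi> i. l (axis i 1))"
proof -
  have x: "x = (\<Sum>i\<in>UNIV. x$i *\<^sub>R axis i 1)"
    using basis_expansion[of x] by (simp add: scalar_mult_eq_scaleR)
  have "l x = (\<Sum>i\<in>UNIV. x$i * l (axis i 1))"
    by (subst x) (simp add: linear_sum[OF assms] linear_scale[OF assms] o_def)
  also have "\<dots> = x \<bullet> (\<chi> i. l (axis i 1))"
    by (simp add: inner_vec_def)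
  finally show ?thesis .
qed

lemma bilinear_eq_inner_form_vec:
  fixes B :: "real^'n \<Rightarrow> real^'n \<Rightarrow> real"
  assumes "bilinear B"
  shows "B x y = x \<bullet> form_vec B y"
  unfolding form_vec_def
  by (rule linear_eq_inner_axis) (use assms in \<open>simp add: bilinear_def\<close>)

lemma linear_form_vec:
  fixes B :: "real^'n \<Rightarrow> real^'n \<Rightarrow> real"
  assumes "bilinear B"
  shows "linear (form_vec B)"
  by (rule linearI)
    (simp_all add: form_vec_def vec_eq_iff bilinear_radd[OF assms] bilinear_rmul[OF assms])

lemma inj_form_vec:
  fixes B :: "real^'n \<Rightarrow> real^'n \<Rightarrow> real"
  assumes "nondeg_sym_form B"
  shows "inj (form_vec B)"
proof -
  have bl: "bilinear B" and sym: "\<And>x y. B x y = B y x" and nd: "\<And>x. \<forall>y. B x y = 0 \<Longrightarrow> x = 0"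
    using assms unfolding nondeg_sym_form_def by auto
  have "y = 0" if "form_vec B y = 0" for y
  proof (rule nd, intro allI)
    fix x
    show "B y x = 0"
      using bilinear_eq_inner_form_vec[OF bl, of x y] that sym[of x y] by simp
  qed
  then show ?thesis
    using linear_injective_0[OF linear_form_vec[OF bl]] by blast
qed

lemma surj_form_vec:
  fixes B :: "real^'n \<Rightarrow> real^'n \<Rightarrow> real"
  assumes "nondeg_sym_form B"
  shows "surj (form_vec B)"
  using assms eucl.linear_inj_imp_surj inj_form_vec linear_form_vec
  unfolding nondeg_sym_form_def by blast

lemma pos_def_form_imp_nondeg_sym_form:
  assumes "pos_def_form B"
  shows "nondeg_sym_form B"
  using assms unfolding pos_def_form_def nondeg_sym_form_def by (metis less_irrefl)

lemma orth_compl_span: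
  assumes "bilinear gb"
  shows "orth_compl gb (span T) = orth_compl gb T"
proof
  show "orth_compl gb (span T) \<subseteq> orth_compl gb T"
    unfolding orth_compl_def using span_base by blast
  show "orth_compl gb T \<subseteq> orth_compl gb (span T)"
  proof
    fix \<xi> assume "\<xi> \<in> orth_compl gb T"
    then have "T \<subseteq> {\<eta>. gb \<xi> \<eta> = 0}" by (auto simp: orth_compl_def)
    moreover have "subspace {\<eta>. gb \<xi> \<eta> = 0}"
      using assms by (simp add: bilinear_def linear_subspace_kernel)
    ultimately have "span T \<subseteq> {\<eta>. gb \<xi> \<eta> = 0}" by (rule span_minimal)
    then show "\<xi> \<in> orth_compl gb (span T)" unfolding orth_compl_def by auto
  qed
qed

lemma dim_orth_compl_add_dim:
  fixes gb :: "real^'k \<Rightarrow> real^'k \<Rightarrow> real"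
  assumes nd: "nondeg_sym_form gb" and W: "subspace W"
  shows "dim (orth_compl gb W) + dim W = CARD('k)"
proof -
  have bl: "bilinear gb" using nd unfolding nondeg_sym_form_def by auto
  have lin: "linear (form_vec gb)" by (rule linear_form_vec[OF bl])
  have "orth_compl gb W = {y \<in> UNIV. \<forall>x \<in> form_vec gb ` W. orthogonal x y}"
    by (auto simp: orth_compl_def orthogonal_def bilinear_eq_inner_form_vec[OF bl] inner_commute)
  moreover have "dim {y \<in> UNIV. \<forall>x \<in> form_vec gb ` W. orthogonal x y} + dim (form_vec gb ` W)
      = dim (UNIV :: (real^'k) set)"
    by (rule dim_subspace_orthogonal_to_vectors[OF linear_subspace_image[OF lin W] subspace_UNIV])
      simp
  moreover have "dim (form_vec gb ` W) = dim W"
    by (rule dim_image_eq[OF lin]) (use inj_form_vec[OF nd] in \<open>auto intro: inj_on_subset\<close>)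
  ultimately show ?thesis by simp
qed

lemma shape_op_eqI:
  fixes g :: "real^'n \<Rightarrow> real^'n \<Rightarrow> real"
  assumes pd: "pos_def_form g" and A: "\<forall>X Y. g (A X) Y = gb (h X Y) \<xi>"
  shows "shape_op g gb h \<xi> = A"
  unfolding shape_op_def
proof (rule the_equality)
  show "\<forall>X Y. g (A X) Y = gb (h X Y) \<xi>" by (rule A)
  fix A' assume A': "\<forall>X Y. g (A' X) Y = gb (h X Y) \<xi>"
  have bl: "bilinear g" and pos: "\<And>x. x \<noteq> 0 \<Longrightarrow> g x x > 0"
    using pd unfolding pos_def_form_def by auto
  show "A' = A"
  proof
    fix X
    let ?d = "A' X - A X"
    have "g ?d ?d = g (A' X) ?d - g (A X) ?d" by (rule bilinear_lsub[OF bl])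
    also have "\<dots> = 0" using A A' by simp
    finally show "A' X = A X" using pos[of ?d] by fastforce
  qed
qed

lemma shape_op_exists:
  fixes g :: "real^'n \<Rightarrow> real^'n \<Rightarrow> real" and h :: "real^'n \<Rightarrow> real^'n \<Rightarrow> 'b::real_vector"
  assumes pd: "pos_def_form g" and gb: "bilinear gb" and h: "sym_bilinear_map h"
  shows "\<exists>A. \<forall>X Y. g (A X) Y = gb (h X Y) \<xi>"
proof -
  have bl: "bilinear g" and sym: "\<And>x y. g x y = g y x"
    using pd unfolding pos_def_form_def by auto
  have "\<exists>v. \<forall>Y. g v Y = gb (h X Y) \<xi>" for X
  proof -
    have "linear (\<lambda>Y. gb (h X Y) \<xi>)"
      using linear_compose[of "h X" "\<lambda>z. gb z \<xi>"] gb h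
      by (simp add: o_def bilinear_def sym_bilinear_map_def)
    note repr = linear_eq_inner_axis[OF this]
    obtain v where v: "form_vec g v = (\<chi> i. gb (h X (axis i 1)) \<xi>)"
      using surj_form_vec[OF pos_def_form_imp_nondeg_sym_form[OF pd]] by (metis surjD)
    have "g v Y = gb (h X Y) \<xi>" for Y
      using bilinear_eq_inner_form_vec[OF bl, of Y v] sym[of v Y] v repr[of Y] by simp
    then show ?thesis by blast
  qed
  then show ?thesis by metis
qed

lemma gram_mult_vec:
  fixes g :: "real^'n \<Rightarrow> real^'n \<Rightarrow> real"
  assumes "bilinear g"
  shows "gram g *v x = form_vec g x"
proof -
  have "(gram g *v x) $ i = g (axis i 1) x" for i
    using linear_eq_inner_axis[of "g (axis i 1)" x] assms
    by (simp add: bilinear_def matrix_vector_mult_def gram_def inner_vec_def mult.commute)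
  then show ?thesis by (simp add: vec_eq_iff form_vec_def)
qed

lemma matrix_inv_gram_mult:
  fixes g :: "real^'n \<Rightarrow> real^'n \<Rightarrow> real"
  assumes pd: "pos_def_form g"
  shows "matrix_inv (gram g) ** gram g = mat 1"
proof -
  have bl: "bilinear g" using pd unfolding pos_def_form_def by auto
  have "\<forall>x. gram g *v x = 0 \<longrightarrow> x = 0"
    using inj_form_vec[OF pos_def_form_imp_nondeg_sym_form[OF pd]] linear_form_vec[OF bl]
    by (simp add: gram_mult_vec[OF bl] linear_injective_0)
  then obtain B where B: "B ** gram g = mat 1" using matrix_left_invertible_ker by blast
  then have "gram g ** B = mat 1" using matrix_left_right_inverse by blast
  with B have "\<exists>A'. gram g ** A' = mat 1 \<and> A' ** gram g = mat 1" by blast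
  then show ?thesis unfolding matrix_inv_def by (rule someI2_ex) blast
qed

text \<open>The trace identity \<open>tr(G\<^sup>-\<^sup>1 G) = n\<close> behind this is where the normalisation
  \<open>H = (1/n) tr\<^sub>g h\<close> pays off.\<close>

lemma mean_curv_of_proportional:
  fixes g :: "real^'n \<Rightarrow> real^'n \<Rightarrow> real" and h :: "real^'n \<Rightarrow> real^'n \<Rightarrow> 'b::real_vector"
  assumes pd: "pos_def_form g" and gb: "bilinear gb"
    and c: "\<forall>X Y. gb (h X Y) \<xi> = c * g X Y"
  shows "gb (mean_curv g h) \<xi> = c"
proof -
  have sym: "\<And>x y. g x y = g y x" using pd unfolding pos_def_form_def by auto
  define M where "M = matrix_inv (gram g)"
  have lin: "linear (\<lambda>z. gb z \<xi>)" using gb by (simp add: bilinear_def)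
  have "gb (mean_curv g h) \<xi> = (1 / real CARD('n)) *
      (\<Sum>i\<in>UNIV. \<Sum>j\<in>UNIV. M $ i $ j * gb (h (axis i 1) (axis j 1)) \<xi>)"
    unfolding mean_curv_def trace_g_def M_def
    by (simp add: linear_scale[OF lin] linear_sum[OF lin] o_def)
  also have "\<dots> = (1 / real CARD('n)) * c * (\<Sum>i\<in>UNIV. (M ** gram g) $ i $ i)"
    using c sym by (simp add: gram_def matrix_matrix_mult_def sum_distrib_left mult_ac)
  also have "\<dots> = c"
    using matrix_inv_gram_mult[OF pd] by (simp add: M_def mat_def)
  finally show ?thesis .
qed

lemma orth_compl_shear_space_iff:
  fixes g :: "real^'n \<Rightarrow> real^'n \<Rightarrow> real" and h :: "real^'n \<Rightarrow> real^'n \<Rightarrow> 'b::real_vector"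
  assumes "nondeg_sym_form gb"
  shows "\<xi> \<in> orth_compl gb (shear_space g h) \<longleftrightarrow>
    (\<forall>X Y. gb (h X Y) \<xi> = gb (mean_curv g h) \<xi> * g X Y)"
proof -
  have bl: "bilinear gb" and sym: "\<And>x y. gb x y = gb y x"
    using assms unfolding nondeg_sym_form_def by auto
  have "gb \<xi> (shear g h X Y) = gb (h X Y) \<xi> - gb (mean_curv g h) \<xi> * g X Y" for X Y
    unfolding shear_def bilinear_rsub[OF bl] bilinear_rmul[OF bl] by (simp add: sym)
  then show ?thesis
    unfolding shear_space_def orth_compl_span[OF bl] by (fastforce simp: orth_compl_def)
qed

lemma umbilical_space_eq_orth_compl_shear_space:
  fixes g :: "real^'n \<Rightarrow> real^'n \<Rightarrow> real" and h :: "real^'n \<Rightarrow> real^'n \<Rightarrow> 'b::real_vector"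
  assumes pd: "pos_def_form g" and nd: "nondeg_sym_form gb" and h: "sym_bilinear_map h"
  shows "umbilical_space g gb h = orth_compl gb (shear_space g h)"
proof -
  have gb: "bilinear gb" using nd unfolding nondeg_sym_form_def by auto
  have g_scale: "g (c *\<^sub>R X) Y = c * g X Y" for c X Y
    using pd bilinear_lmul[of g c X Y] unfolding pos_def_form_def by simp
  show ?thesis
  proof (intro set_eqI iffI)
    fix \<xi> assume "\<xi> \<in> umbilical_space g gb h"
    then obtain c where c: "shape_op g gb h \<xi> = (\<lambda>X. c *\<^sub>R X)"
      unfolding umbilical_space_def by auto
    obtain A where A: "\<forall>X Y. g (A X) Y = gb (h X Y) \<xi>"
      using shape_op_exists[OF pd gb h] by blast
    have "A = (\<lambda>X. c *\<^sub>R X)" using shape_op_eqI[of g A gb h \<xi>] pd A c by simp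
    then have proportional: "\<forall>X Y. gb (h X Y) \<xi> = c * g X Y" using A g_scale by simp
    then have "gb (mean_curv g h) \<xi> = c" by (rule mean_curv_of_proportional[OF pd gb])
    with proportional show "\<xi> \<in> orth_compl gb (shear_space g h)"
      by (simp add: orth_compl_shear_space_iff[OF nd])
  next
    fix \<xi> assume "\<xi> \<in> orth_compl gb (shear_space g h)"
    then have "\<forall>X Y. g (gb (mean_curv g h) \<xi> *\<^sub>R X) Y = gb (h X Y) \<xi>"
      by (simp add: orth_compl_shear_space_iff[OF nd] g_scale)
    then have "shape_op g gb h \<xi> = (\<lambda>X. gb (mean_curv g h) \<xi> *\<^sub>R X)"
      by (rule shape_op_eqI[OF pd])
    then show "\<xi> \<in> umbilical_space g gb h"
      unfolding umbilical_space_def by blast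
  qed
qed

theorem corollary3p3:
  fixes S :: "'p set"
    and g :: "'p \<Rightarrow> real^'n \<Rightarrow> real^'n \<Rightarrow> real"
    and gb :: "'p \<Rightarrow> real^'k \<Rightarrow> real^'k \<Rightarrow> real"
    and h :: "'p \<Rightarrow> real^'n \<Rightarrow> real^'n \<Rightarrow> real^'k"
  assumes g_pd: "\<forall>p\<in>S. pos_def_form (g p)"
    and gb_nd: "\<forall>p\<in>S. nondeg_sym_form (gb p)"
    and h_sym: "\<forall>p\<in>S. sym_bilinear_map (h p)"
    and const_dim: "\<exists>d. \<forall>p\<in>S. dim (shear_space (g p) (h p)) = d"
  shows "(\<exists>d. \<forall>p\<in>S. dim (umbilical_space (g p) (gb p) (h p)) = d)
    \<and> umbilical_fields S g gb h = shear_perp_fields S g gb h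
    \<and> (\<forall>p\<in>S. umbilical_space (g p) (gb p) (h p) = orth_compl (gb p) (shear_space (g p) (h p))
          \<and> CARD('k) - dim (umbilical_space (g p) (gb p) (h p)) = dim (shear_space (g p) (h p)))"
proof -
  have U: "\<forall>p\<in>S. umbilical_space (g p) (gb p) (h p) = orth_compl (gb p) (shear_space (g p) (h p))"
    using umbilical_space_eq_orth_compl_shear_space g_pd gb_nd h_sym by blast
  have D: "dim (umbilical_space (g p) (gb p) (h p)) + dim (shear_space (g p) (h p)) = CARD('k)"
    if "p \<in> S" for p
    using U that dim_orth_compl_add_dim[OF bspec[OF gb_nd that], of "shear_space (g p) (h p)"]
    by (simp add: shear_space_def)
  obtain d where d: "\<forall>p\<in>S. dim (shear_space (g p) (h p)) = d" using const_dim by blast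
  have "\<forall>p\<in>S. dim (umbilical_space (g p) (gb p) (h p)) = CARD('k) - d"
    using D d by (metis add_diff_cancel_right')
  moreover have "umbilical_fields S g gb h = shear_perp_fields S g gb h"
    unfolding umbilical_fields_def shear_perp_fields_def using U by auto
  ultimately show ?thesis using U D by (metis add_diff_cancel_left')
qed

end
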